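(* Let $A$ be a deterministic KAT automaton over $(\Sigma_0,T)$ and let $\mathfrak{s}$ assign to each $p\in\Sigma_0$ a deterministic KAT automaton over $(\Sigma_1,T)$. If $r_1,r_2$ are states of $\mathsf{compose}^{\mathfrak{s}}(A)$ in the same locale, $\alpha\in\mathsf{At}_T$, and $r_1\xrightarrow{\alpha\mid p}r_1'$ and $r_2\xrightarrow{\alpha\mid p'}r_2'$ are non-local transitions of $\mathsf{compose}^{\mathfrak{s}}(A)$, then $p=p'$.
   Context: Atoms $\mathsf{At}_T=2^T$. Deterministic KAT automaton over $(\Sigma,T)$: $A=(Q,\delta,\iota)$, $Q$ finite, $\delta:Q\times\mathsf{At}_T\to\{\mathsf{accept},\mathsf{reject}\}+\Sigma\times Q$, $\iota:\mathsf{At}_T\to\{\mathsf{accept},\mathsf{reject}\}+\Sigma\times Q$. Write $q\xrightarrow{\alpha\mid p}q'$ for $\delta(q,\alpha)=(p,q')$. $\mathsf{compose}^{\mathfrak{s}}(A)$ for $A=(Q,\delta,\iota)$ over $(\Sigma_0,T)$ and $\mathfrak{s}(p)=(Q_p,\delta_p,\iota_p)$ over $(\Sigma_1,T)$: $\hat\delta(q,\alpha)=\mathsf{accept}$ if $\delta(q,\alpha)=\mathsf{accept}$; $=(p,q')$ if $\delta(q,\alpha)=(p,q')$ and $\iota_p(\alpha)\ne\mathsf{accept}$; $=\hat\delta(q',\alpha)$ if $\delta(q,\alpha)=(p,q')$ and $\iota_p(\alpha)=\mathsf{accept}$; $=\mathsf{reject}$ otherwise (including when the recursion does not terminate). $\hat\iota(\alpha)=\hat\delta(q,\alpha)$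 if $\iota(\alpha)=(p,q)$ and $\iota_p(\alpha)=\mathsf{accept}$, else $\iota(\alpha)$. $\mathsf{compose}^{\mathfrak{s}}(A)=(Q',\delta',\iota')$ over $(\Sigma_1,T)$ with $Q'=\sum_{p\in\Sigma_0}Q_p\times Q$ (disjoint union) and for $q_p\in Q_p$, $q\in Q$: (case 1) $\delta'((q_p,q),\alpha)=(p'',(q_p',q))$ if $\delta_p(q_p,\alpha)=(p'',q_p')$; (case 2) $=(p'',(q_{p'},q'))$ if $\delta_p(q_p,\alpha)=\mathsf{accept}$, $\hat\delta(q,\alpha)=(p',q')$ and $\iota_{p'}(\alpha)=(p'',q_{p'})$; (case 3) $=\mathsf{accept}$ if $\delta_p(q_p,\alpha)=\mathsf{accept}$ and $\hat\delta(q,\alpha)=\mathsf{accept}$; $=\mathsf{reject}$ otherwise. $\iota'(\alpha)=\mathsf{accept}$ if $\hat\iota(\alpha)=\mathsf{accept}$; $=(p'',(q_{p'},q))$ if $\hat\iota(\alpha)=(p',q)$ and $\iota_{p'}(\alpha)=(p'',q_{p'})$; $=\mathsf{reject}$ otherwise. Two states $(q_1,q_2),(q_3,q_4)$ of $\mathsf{compose}^{\mathfrak{s}}(A)$ are in the same locale if $q_2=q_4$ and $q_1,q_3$ belong to the same subautomaton, i.e. both lie in $Q_p$ for the same $p\in\Sigma_0$. A transition of $\mathsf{compose}^{\mathfrak{s}}(A)$ is local if it is produced by case 1 of $\delta'$, and non-local otherwise. *)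

theory Defs
  imports Main
begin

datatype ('s, 'q) outcome = Accept | Reject | Trans 's 'q

text \<open>Deterministic KAT automaton over (Sigma, T): the alphabet Sigma is the type 's,
  atoms At_T = 2^T are the sets of type 't set (T = UNIV :: 't set, 't finite).\<close>
record ('q, 's, 't) kat_aut =
  states :: "'q set"
  delta :: "'q \<Rightarrow> 't set \<Rightarrow> ('s, 'q) outcome"
  iota :: "'t set \<Rightarrow> ('s, 'q) outcome"

definition outcome_in :: "'q set \<Rightarrow> ('s, 'q) outcome \<Rightarrow> bool" where
  "outcome_in Q r \<longleftrightarrow> (\<forall>p q. r = Trans p q \<longrightarrow> q \<in> Q)"

definition det_kat_aut :: "('q, 's, 't::finite) kat_aut \<Rightarrow> bool" where
  "det_kat_aut A \<longleftrightarrow> finite (states A)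
     \<and> (\<forall>q\<in>states A. \<forall>\<alpha>. outcome_in (states A) (delta A q \<alpha>))
     \<and> (\<forall>\<alpha>. outcome_in (states A) (iota A \<alpha>))"

text \<open>Terminating runs of the recursive definition of hat-delta.\<close>
inductive hat_delta_rel ::
  "('q, 'p, 't) kat_aut \<Rightarrow> ('p \<Rightarrow> ('r, 'b, 't) kat_aut) \<Rightarrow> 't set \<Rightarrow> 'q \<Rightarrow> ('p, 'q) outcome \<Rightarrow> bool"
  for A s \<alpha> where
  hd_accept: "delta A q \<alpha> = Accept \<Longrightarrow> hat_delta_rel A s \<alpha> q Accept"
| hd_trans: "delta A q \<alpha> = Trans p q' \<Longrightarrow> iota (s p) \<alpha> \<noteq> Accept \<Longrightarrow> hat_delta_rel A s \<alpha> q (Trans p q')"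
| hd_skip: "delta A q \<alpha> = Trans p q' \<Longrightarrow> iota (s p) \<alpha> = Accept \<Longrightarrow> hat_delta_rel A s \<alpha> q' r
            \<Longrightarrow> hat_delta_rel A s \<alpha> q r"
| hd_reject: "delta A q \<alpha> = Reject \<Longrightarrow> hat_delta_rel A s \<alpha> q Reject"

text \<open>hat-delta: the result of the recursion, or reject if it does not terminate.\<close>
definition hat_delta ::
  "('q, 'p, 't) kat_aut \<Rightarrow> ('p \<Rightarrow> ('r, 'b, 't) kat_aut) \<Rightarrow> 'q \<Rightarrow> 't set \<Rightarrow> ('p, 'q) outcome" where
  "hat_delta A s q \<alpha> = (if \<exists>r. hat_delta_rel A s \<alpha> q r then THE r. hat_delta_rel A s \<alpha> q r else Reject)"

definition hat_iota ::
  "('q, 'p, 't) kat_aut \<Rightarrow> ('p \<Rightarrow> ('r, 'b, 't) kat_aut) \<Rightarrow> 't set \<Rightarrow> ('p, 'q) outcome" where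
  "hat_iota A s \<alpha> = (case iota A \<alpha> of
      Trans p q \<Rightarrow> (if iota (s p) \<alpha> = Accept then hat_delta A s q \<alpha> else Trans p q)
    | r \<Rightarrow> r)"

text \<open>States of compose^s(A): the disjoint union sum_p Q_p x Q, encoded as ((p, q_p), q).\<close>
definition compose_states ::
  "('q, 'p, 't) kat_aut \<Rightarrow> ('p \<Rightarrow> ('r, 'b, 't) kat_aut) \<Rightarrow> (('p \<times> 'r) \<times> 'q) set" where
  "compose_states A s = {((p, qp), q). qp \<in> states (s p) \<and> q \<in> states A}"

definition compose_delta ::
  "('q, 'p, 't) kat_aut \<Rightarrow> ('p \<Rightarrow> ('r, 'b, 't) kat_aut) \<Rightarrow> ('p \<times> 'r) \<times> 'q \<Rightarrow> 't set \<Rightarrow> ('b, ('p \<times> 'r) \<times> 'q) outcome" where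
  "compose_delta A s r \<alpha> = (case r of ((p, qp), q) \<Rightarrow>
     (case delta (s p) qp \<alpha> of
        Trans b qp' \<Rightarrow> Trans b ((p, qp'), q)
      | Accept \<Rightarrow> (case hat_delta A s q \<alpha> of
            Accept \<Rightarrow> Accept
          | Trans p' q' \<Rightarrow> (case iota (s p') \<alpha> of
                Trans b qp' \<Rightarrow> Trans b ((p', qp'), q')
              | _ \<Rightarrow> Reject)
          | Reject \<Rightarrow> Reject)
      | Reject \<Rightarrow> Reject))"

definition compose_iota ::
  "('q, 'p, 't) kat_aut \<Rightarrow> ('p \<Rightarrow> ('r, 'b, 't) kat_aut) \<Rightarrow> 't set \<Rightarrow> ('b, ('p \<times> 'r) \<times> 'q) outcome" where
  "compose_iota A s \<alpha> = (case hat_iota A s \<alpha> of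
      Accept \<Rightarrow> Accept
    | Trans p' q \<Rightarrow> (case iota (s p') \<alpha> of
          Trans b qp \<Rightarrow> Trans b ((p', qp), q)
        | _ \<Rightarrow> Reject)
    | Reject \<Rightarrow> Reject)"

definition compose :: "('q, 'p, 't) kat_aut \<Rightarrow> ('p \<Rightarrow> ('r, 'b, 't) kat_aut) \<Rightarrow> (('p \<times> 'r) \<times> 'q, 'b, 't) kat_aut" where
  "compose A s = \<lparr>states = compose_states A s, delta = compose_delta A s, iota = compose_iota A s\<rparr>"

definition same_locale :: "('p \<times> 'r) \<times> 'q \<Rightarrow> ('p \<times> 'r) \<times> 'q \<Rightarrow> bool" where
  "same_locale r1 r2 \<longleftrightarrow> snd r1 = snd r2 \<and> fst (fst r1) = fst (fst r2)"

definition nonlocal_trans ::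
  "('q, 'p, 't) kat_aut \<Rightarrow> ('p \<Rightarrow> ('r, 'b, 't) kat_aut) \<Rightarrow> ('p \<times> 'r) \<times> 'q \<Rightarrow> 't set \<Rightarrow> 'b \<Rightarrow> ('p \<times> 'r) \<times> 'q \<Rightarrow> bool" where
  "nonlocal_trans A s r \<alpha> b r' \<longleftrightarrow>
     delta (compose A s) r \<alpha> = Trans b r'
     \<and> \<not> (\<exists>b' qp'. delta (s (fst (fst r))) (snd (fst r)) \<alpha> = Trans b' qp')"

end

theory Submission
  imports Defs
begin

text \<open>A non-local transition of \<open>compose A s\<close> from \<open>((p, q\<^sub>p), q)\<close> under \<open>\<alpha>\<close> is the initial
  transition under \<open>\<alpha>\<close> of the subautomaton \<open>s p'\<close>, where \<open>p'\<close> is the letter emitted by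
  \<open>hat_delta A s q \<alpha>\<close>. Its output letter is therefore determined by the outer state \<open>q\<close>
  and \<open>\<alpha>\<close> alone, and two states in the same locale share \<open>q\<close>.\<close>

lemma nonlocal_trans_via_hat_delta:
  assumes "nonlocal_trans A s r \<alpha> b r'"
  obtains p' q' qp' where "hat_delta A s (snd r) \<alpha> = Trans p' q'"
    and "iota (s p') \<alpha> = Trans b qp'" and "r' = ((p', qp'), q')"
proof -
  obtain p qp q where r: "r = ((p, qp), q)" by (metis prod.exhaust)
  have step: "compose_delta A s ((p, qp), q) \<alpha> = Trans b r'"
    and nonlocal: "\<And>b' qp'. delta (s p) qp \<alpha> \<noteq> Trans b' qp'"
    using assms by (auto simp: nonlocal_trans_def compose_def r)
  then have accept: "delta (s p) qp \<alpha> = Accept"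
    by (cases "delta (s p) qp \<alpha>") (auto simp: compose_delta_def)
  with step obtain p' q' where hat: "hat_delta A s q \<alpha> = Trans p' q'"
    by (cases "hat_delta A s q \<alpha>") (auto simp: compose_delta_def)
  with step accept obtain qp' where init: "iota (s p') \<alpha> = Trans b qp'"
    and target: "r' = ((p', qp'), q')"
    by (cases "iota (s p') \<alpha>") (auto simp: compose_delta_def)
  show thesis
    using hat by (intro that[OF _ init target]) (simp add: r)
qed

theorem lemma6p14:
  fixes A :: "('q, 'p, 't::finite) kat_aut"
    and s :: "'p \<Rightarrow> ('r, 'b, 't) kat_aut"
  assumes "det_kat_aut A"
    and "\<forall>p. det_kat_aut (s p)"
    and "r1 \<in> states (compose A s)" and "r2 \<in> states (compose A s)"
    and "same_locale r1 r2"
    and "nonlocal_trans A s r1 \<alpha> b r1'"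
    and "nonlocal_trans A s r2 \<alpha> b' r2'"
  shows "b = b'"
proof -
  have same_outer: "snd r1 = snd r2"
    using \<open>same_locale r1 r2\<close> by (simp add: same_locale_def)
  obtain p1 q1 qp1 where hat1: "hat_delta A s (snd r1) \<alpha> = Trans p1 q1"
    and init1: "iota (s p1) \<alpha> = Trans b qp1"
    by (rule nonlocal_trans_via_hat_delta[OF \<open>nonlocal_trans A s r1 \<alpha> b r1'\<close>])
  obtain p2 q2 qp2 where hat2: "hat_delta A s (snd r2) \<alpha> = Trans p2 q2"
    and init2: "iota (s p2) \<alpha> = Trans b' qp2"
    by (rule nonlocal_trans_via_hat_delta[OF \<open>nonlocal_trans A s r2 \<alpha> b' r2'\<close>])
  have "p1 = p2"
    using hat1 hat2 same_outer by simp
  then show ?thesis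
    using init1 init2 by simp
qed

end
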